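(* Let $\lambda>0$, $h\in C^2([0,1])$, $\varrho_\lambda(s)=\frac{\lambda}{(1-s)^2}\exp\!\big[-\frac{\lambda s}{1-s}\big]$ for $s\in[0,1)$, and $\tilde h(s)=h(s)-\int_0^1\mathrm dx\,\varrho_\lambda(x)h(x)$. Then the function $G:(0,1)\to\mathbb R$, $$G(s)=\frac1s\exp\Big[\frac{\lambda}{1-s}\Big]\int_0^s\mathrm dx\,\frac{\tilde h(x)}{(1-x)^2}\exp\Big[\frac{-\lambda}{1-x}\Big],$$ has a continuous extension to $[0,1]$ which lies in $C^2([0,1])$.
   Context: $C^2([0,1])$ denotes twice continuously differentiable functions on $[0,1]$, with one-sided derivatives at the endpoints. $h$ is real-valued. *)

theory Defs
  imports "HOL-Analysis.Analysis"
begin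

definition C2_on_01 :: "(real \<Rightarrow> real) \<Rightarrow> bool" where
  "C2_on_01 f \<longleftrightarrow> (\<exists>f' f''.
      (\<forall>x\<in>{0..1}. (f has_real_derivative f' x) (at x within {0..1})) \<and>
      (\<forall>x\<in>{0..1}. (f' has_real_derivative f'' x) (at x within {0..1})) \<and>
      continuous_on {0..1} f'')"

definition rho :: "real \<Rightarrow> real \<Rightarrow> real" where
  "rho lam s = lam / (1 - s)^2 * exp (- (lam * s / (1 - s)))"

definition htilde :: "real \<Rightarrow> (real \<Rightarrow> real) \<Rightarrow> real \<Rightarrow> real" where
  "htilde lam h s = h s - integral {0..1} (\<lambda>x. rho lam x * h x)"

definition Gfun :: "real \<Rightarrow> (real \<Rightarrow> real) \<Rightarrow> real \<Rightarrow> real" where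
  "Gfun lam h s = (1 / s) * exp (lam / (1 - s)) *
     integral {0..s} (\<lambda>x. htilde lam h x / (1 - x)^2 * exp (- lam / (1 - x)))"

end

(* Write G(s) = (1/s) exp (lam/(1-s)) \<integral>\<^sub>0\<^sup>s m with m(x) = h~(x) exp (-lam/(1-x)) / (1-x)^2.
   Since m = exp (-lam)/lam * rho_lam h~ and rho_lam is a probability density on [0,1], the centring
   of h~ gives \<integral>\<^sub>0\<^sup>1 m = 0.

   Near s = 0, (1/s) \<integral>\<^sub>0\<^sup>s m = \<integral>\<^sub>0\<^sup>1 m(r s) dr with m of class C^2 on [0,b] for b < 1.

   Near s = 1, \<integral>\<^sub>0\<^sup>s m = - \<integral>\<^sub>s\<^sup>1 m, and the substitution w = exp (lam/(2(1-s)) - lam/(2(1-x)))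
   absorbs the exploding factor exp (lam/(1-s)):
     G(s) = - 2/(lam s) \<integral>\<^sub>0\<^sup>1 w h~(X(s,w)) dw,   X(s,w) = 1 - lam(1-s) / (lam - 2(1-s) ln w).
   The integrand and its first two s-derivatives are continuous on [0,1] x [0,1], because near w = 0
   they are dominated by multiples of w and |w ln w|; so this representation is C^2 up to s = 1.

   The two representations agree on [1/4,3/4], where they are glued. *)

theory Submission
  imports Defs "HOL-Real_Asymp.Real_Asymp"
begin

definition C2_on :: "real set \<Rightarrow> (real \<Rightarrow> real) \<Rightarrow> (real \<Rightarrow> real) \<Rightarrow> (real \<Rightarrow> real) \<Rightarrow> bool" where
  "C2_on S f f' f'' \<longleftrightarrow> (\<forall>x\<in>S. (f has_real_derivative f' x) (at x within S)) \<and>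
     (\<forall>x\<in>S. (f' has_real_derivative f'' x) (at x within S)) \<and> continuous_on S f''"

lemma C2_on_01_iff: "C2_on_01 f \<longleftrightarrow> (\<exists>f' f''. C2_on {0..1} f f' f'')"
  unfolding C2_on_01_def C2_on_def ..

lemma C2_onD:
  assumes "C2_on S f f' f''"
  shows "\<And>x. x \<in> S \<Longrightarrow> (f has_real_derivative f' x) (at x within S)"
    and "\<And>x. x \<in> S \<Longrightarrow> (f' has_real_derivative f'' x) (at x within S)"
    and "continuous_on S f''" "continuous_on S f'" "continuous_on S f"
  using assms unfolding C2_on_def by (auto intro: DERIV_continuous_on)

lemma C2_on_at:
  assumes "\<And>x. x \<in> S \<Longrightarrow> (f has_real_derivative f' x) (at x)"
    and "\<And>x. x \<in> S \<Longrightarrow> (f' has_real_derivative f'' x) (at x)"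
    and "continuous_on S f''"
  shows "C2_on S f f' f''"
  using assms unfolding C2_on_def by (auto intro: has_field_derivative_at_within)

lemma C2_on_const: "C2_on S (\<lambda>x. c) (\<lambda>x. 0) (\<lambda>x. 0)"
  unfolding C2_on_def by (auto intro!: derivative_eq_intros continuous_intros)

lemma C2_on_add:
  assumes "C2_on S f f' f''" and "C2_on S g g' g''"
  shows "C2_on S (\<lambda>x. f x + g x) (\<lambda>x. f' x + g' x) (\<lambda>x. f'' x + g'' x)"
  using C2_onD[OF assms(1)] C2_onD[OF assms(2)] unfolding C2_on_def
  by (auto intro!: derivative_eq_intros continuous_intros)

lemma C2_on_mult:
  assumes f: "C2_on S f f' f''" and g: "C2_on S g g' g''"
  shows "C2_on S (\<lambda>x. f x * g x) (\<lambda>x. f' x * g x + f x * g' x)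
     (\<lambda>x. f'' x * g x + 2 * (f' x * g' x) + f x * g'' x)"
  using C2_onD[OF f] C2_onD[OF g] unfolding C2_on_def
  by (auto intro!: derivative_eq_intros continuous_intros simp: algebra_simps)

lemma C2_on_subset: "C2_on S f f' f'' \<Longrightarrow> T \<subseteq> S \<Longrightarrow> C2_on T f f' f''"
  unfolding C2_on_def by (meson DERIV_subset continuous_on_subset subsetD)

lemma C2_on_cong: "C2_on S f f' f'' \<Longrightarrow> (\<And>x. x \<in> S \<Longrightarrow> f x = g x) \<Longrightarrow> C2_on S g f' f''"
  unfolding C2_on_def by (metis has_field_derivative_transform_within zero_less_one)

lemma C2_on_locally:
  assumes "\<And>x. x \<in> S \<Longrightarrow> \<exists>V T f f' f''. open V \<and> x \<in> V \<and> S \<inter> V \<subseteq> T \<and> C2_on T f f' f'' \<and>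
      (\<forall>y\<in>S \<inter> V. g y = f y \<and> g' y = f' y \<and> g'' y = f'' y)"
  shows "C2_on S g g' g''"
proof -
  have "(g has_real_derivative g' x) (at x within S) \<and> (g' has_real_derivative g'' x) (at x within S)
      \<and> continuous (at x within S) g''" if x: "x \<in> S" for x
  proof -
    obtain V T f f' f'' where V: "open V" "x \<in> V" and T: "S \<inter> V \<subseteq> T" and f: "C2_on T f f' f''"
      and eq: "\<And>y. y \<in> S \<inter> V \<Longrightarrow> g y = f y \<and> g' y = f' y \<and> g'' y = f'' y"
      using assms[OF x] by blast
    have xSV: "x \<in> S \<inter> V" and xT: "x \<in> T" using x V T by blast+
    have at: "at x within S = at x within S \<inter> V"
      by (rule at_within_nhd[OF V(2,1)]) auto
    have f_at: "(f has_real_derivative f' x) (at x within S \<inter> V)"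
      "(f' has_real_derivative f'' x) (at x within S \<inter> V)" "continuous (at x within S \<inter> V) f''"
      using C2_onD[OF f] xT T continuous_on_eq_continuous_within continuous_within_subset
      by (blast intro: DERIV_subset)+
    have "eventually (\<lambda>y. y \<in> S \<inter> V \<longrightarrow> f y = g y) (nhds x)"
      "eventually (\<lambda>y. y \<in> S \<inter> V \<longrightarrow> f' y = g' y) (nhds x)"
      "eventually (\<lambda>y. f'' y = g'' y) (at x within S \<inter> V)"
      using eq by (auto simp: eventually_at_filter)
    then have "(g has_real_derivative g' x) (at x within S \<inter> V)"
      "(g' has_real_derivative g'' x) (at x within S \<inter> V)" "continuous (at x within S \<inter> V) g''"
      using f_at eq[OF xSV] xSV unfolding continuous_within
      by (simp_all add: has_field_derivative_cong_ev[OF refl _ _ refl xSV] Lim_transform_eventually)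
    then show ?thesis unfolding at by blast
  qed
  then show ?thesis
    unfolding C2_on_def continuous_on_eq_continuous_within by blast
qed

lemma DERIV_eq_on_open:
  assumes "(f has_real_derivative Df) (at x within S)" "(g has_real_derivative Dg) (at x within T)"
    and "open U" "x \<in> U" "U \<subseteq> S" "U \<subseteq> T" "\<And>y. y \<in> U \<Longrightarrow> f y = g y"
  shows "Df = Dg"
proof -
  have "(f has_real_derivative Df) (at x)" "(g has_real_derivative Dg) (at x)"
    using DERIV_subset[OF assms(1,5)] DERIV_subset[OF assms(2,6)] at_within_open[OF assms(4,3)] by auto
  moreover have "(g has_real_derivative Df) (at x)"
    using calculation(1) assms(3,4,7) by (rule has_field_derivative_transform_within_open)
  ultimately show ?thesis by (blast intro: DERIV_unique)
qed

lemma C2_on_glue: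
  assumes A: "C2_on {a..c} A A' A''" and B: "C2_on {b..d} B B' B''"
    and "a \<le> b" "b < m" "m < c" "c \<le> d" and eq: "\<And>x. x \<in> {b..c} \<Longrightarrow> A x = B x"
  shows "C2_on {a..d} (\<lambda>x. if x \<le> m then A x else B x)
    (\<lambda>x. if x \<le> m then A' x else B' x) (\<lambda>x. if x \<le> m then A'' x else B'' x)"
proof (rule C2_on_locally)
  have eq1: "A' x = B' x" if "x \<in> {b<..<c}" for x
    by (rule DERIV_eq_on_open[OF C2_onD(1)[OF A] C2_onD(1)[OF B], of x "{b<..<c}"])
      (use that eq assms(3-6) in auto)
  have eq2: "A'' x = B'' x" if "x \<in> {b<..<c}" for x
    by (rule DERIV_eq_on_open[OF C2_onD(2)[OF A] C2_onD(2)[OF B], of x "{b<..<c}"])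
      (use that eq1 assms(3-6) in auto)
  have overlap: "A y = B y \<and> A' y = B' y \<and> A'' y = B'' y" if "b < y" "y < c" for y
    using that eq eq1 eq2 by simp
  fix x assume "x \<in> {a..d}"
  show "\<exists>V T f f' f''. open V \<and> x \<in> V \<and> {a..d} \<inter> V \<subseteq> T \<and> C2_on T f f' f'' \<and>
      (\<forall>y\<in>{a..d} \<inter> V. (if y \<le> m then A y else B y) = f y \<and> (if y \<le> m then A' y else B' y) = f' y
         \<and> (if y \<le> m then A'' y else B'' y) = f'' y)"
  proof (cases "x \<le> m")
    case True
    have "\<forall>y\<in>{a..d} \<inter> {..<c}. (if y \<le> m then A y else B y) = A y \<and>
        (if y \<le> m then A' y else B' y) = A' y \<and> (if y \<le> m then A'' y else B'' y) = A'' y"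
      using overlap assms(4) by fastforce
    moreover have "open {..<c}" "x \<in> {..<c}" "{a..d} \<inter> {..<c} \<subseteq> {a..c}"
      using True assms(5) by auto
    ultimately show ?thesis using A by blast
  next
    case False
    have "\<forall>y\<in>{a..d} \<inter> {b<..}. (if y \<le> m then A y else B y) = B y \<and>
        (if y \<le> m then A' y else B' y) = B' y \<and> (if y \<le> m then A'' y else B'' y) = B'' y"
      using overlap assms(5) by fastforce
    moreover have "open {b<..}" "x \<in> {b<..}" "{a..d} \<inter> {b<..} \<subseteq> {b..d}"
      using False assms(4) by auto
    ultimately show ?thesis using B by blast
  qed
qed

lemma C2_on_parametric_integral:
  fixes f f1 f2 :: "real \<Rightarrow> real \<Rightarrow> real"
  assumes "convex U"
    and "\<And>x t. x \<in> U \<Longrightarrow> t \<in> {a..b} \<Longrightarrow> ((\<lambda>x. f x t) has_real_derivative f1 x t) (at x within U)"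
    and "\<And>x t. x \<in> U \<Longrightarrow> t \<in> {a..b} \<Longrightarrow> ((\<lambda>x. f1 x t) has_real_derivative f2 x t) (at x within U)"
    and "continuous_on (U \<times> {a..b}) (\<lambda>(x, t). f x t)"
    and "continuous_on (U \<times> {a..b}) (\<lambda>(x, t). f1 x t)"
    and "continuous_on (U \<times> {a..b}) (\<lambda>(x, t). f2 x t)"
  shows "C2_on U (\<lambda>x. integral {a..b} (f x)) (\<lambda>x. integral {a..b} (f1 x)) (\<lambda>x. integral {a..b} (f2 x))"
proof -
  have integrable: "g x integrable_on {a..b}"
    if "x \<in> U" "continuous_on (U \<times> {a..b}) (\<lambda>(x, t). g x t)" for g :: "real \<Rightarrow> real \<Rightarrow> real" and x
    by (rule integrable_continuous_interval,
        rule continuous_on_compose2[OF that(2), of _ "\<lambda>t. (x, t)", simplified])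
      (use that in \<open>auto intro!: continuous_intros\<close>)
  show ?thesis
    unfolding C2_on_def
    using assms integrable integral_continuous_on_param[of U a b f2]
      leibniz_rule_field_derivative[of U a b f f1] leibniz_rule_field_derivative[of U a b f1 f2]
    by simp
qed

lemma C2_on_integral_rescaled:
  assumes g: "C2_on {0..b} g g' g''"
  shows "C2_on {0..b} (\<lambda>s. integral {0..1} (\<lambda>r. g (r * s)))
    (\<lambda>s. integral {0..1} (\<lambda>r. r * g' (r * s))) (\<lambda>s. integral {0..1} (\<lambda>r. r * (r * g'' (r * s))))"
proof (rule C2_on_parametric_integral)
  have rs: "r * s \<in> {0..b}" if "r \<in> {0..1}" "s \<in> {0..b}" for r s
    using that mult_left_le_one_le[of s r] by auto
  have chain: "((\<lambda>s. k (r * s)) has_real_derivative r * k' (r * s)) (at s within {0..b})"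
    if k: "\<And>x. x \<in> {0..b} \<Longrightarrow> (k has_real_derivative k' x) (at x within {0..b})"
      and "r \<in> {0..1}" "s \<in> {0..b}" for k k' r s
  proof -
    have "(k has_real_derivative k' (r * s)) (at (r * s) within (\<lambda>s. r * s) ` {0..b})"
      by (rule DERIV_subset[OF k]) (use rs that in auto)
    moreover have "((\<lambda>s. r * s) has_real_derivative r) (at s within {0..b})"
      by (auto intro!: derivative_eq_intros)
    ultimately show ?thesis
      using DERIV_image_chain by (fastforce simp: o_def mult.commute)
  qed
  show "((\<lambda>s. g (r * s)) has_real_derivative r * g' (r * s)) (at s within {0..b})"
    if "s \<in> {0..b}" "r \<in> {0..1}" for s r
    using chain[OF C2_onD(1)[OF g] that(2,1)] .
  show "((\<lambda>s. r * g' (r * s)) has_real_derivative r * (r * g'' (r * s))) (at s within {0..b})"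
    if "s \<in> {0..b}" "r \<in> {0..1}" for s r
    using DERIV_cmult[OF chain[OF C2_onD(2)[OF g] that(2,1)], of r] .
  have "continuous_on ({0..b} \<times> {0..1}) (\<lambda>p. k (snd p * fst p))" if "continuous_on {0..b} k" for k
    by (rule continuous_on_compose2[OF that]) (auto intro!: continuous_intros rs)
  from this[OF C2_onD(5)[OF g]] this[OF C2_onD(4)[OF g]] this[OF C2_onD(3)[OF g]]
  show "continuous_on ({0..b} \<times> {0..1}) (\<lambda>(s, r). g (r * s))"
    "continuous_on ({0..b} \<times> {0..1}) (\<lambda>(s, r). r * g' (r * s))"
    "continuous_on ({0..b} \<times> {0..1}) (\<lambda>(s, r). r * (r * g'' (r * s)))"
    by (auto simp: case_prod_beta intro!: continuous_intros)
qed simp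

lemma continuous_on_Times_if_dominated:
  fixes F :: "'a::t2_space \<times> real \<Rightarrow> real"
  assumes cont: "continuous_on (U \<times> {0<..1}) F"
    and dom: "\<And>x w. x \<in> U \<Longrightarrow> w \<in> {0..1} \<Longrightarrow> \<bar>F (x, w)\<bar> \<le> B w"
    and "continuous_on {0..1} B" "B 0 = 0"
  shows "continuous_on (U \<times> {0..1}) F"
  unfolding continuous_on_eq_continuous_within
proof (intro ballI)
  fix p :: "'a \<times> real" assume p: "p \<in> U \<times> {0..1}"
  obtain x w where xw: "p = (x, w)" by (cases p)
  show "continuous (at p within U \<times> {0..1}) F"
  proof (cases "w = 0")
    case False
    then have "p \<in> U \<times> {0<..1}" using p xw by auto
    moreover have "at p within U \<times> {0..1} = at p within U \<times> {0<..1}"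
      by (rule at_within_nhd[of _ "UNIV \<times> {0<..}"]) (use calculation in \<open>auto simp: open_Times\<close>)
    ultimately show ?thesis
      using cont continuous_on_eq_continuous_within by auto
  next
    case True
    have "continuous_on (U \<times> {0..1}) (\<lambda>q. B (snd q))"
      by (rule continuous_on_compose2[OF assms(3) continuous_on_snd]) auto
    then have "((\<lambda>q. B (snd q)) \<longlongrightarrow> B (snd p)) (at p within U \<times> {0..1})"
      using p unfolding continuous_on_def by blast
    then have B0: "((\<lambda>q. B (snd q)) \<longlongrightarrow> 0) (at p within U \<times> {0..1})"
      using xw True assms(4) by simp
    have "\<forall>q \<in> U \<times> {0..1}. norm (F q) \<le> B (snd q)"
      using dom by auto
    then have "eventually (\<lambda>q. norm (F q) \<le> B (snd q)) (at p within U \<times> {0..1})"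
      by (auto simp: eventually_at_filter intro!: always_eventually)
    then have "(F \<longlongrightarrow> 0) (at p within U \<times> {0..1})"
      using B0 by (rule Lim_null_comparison)
    moreover have "F p = 0" using dom[of x w] p xw True assms(4) by simp
    ultimately show ?thesis by (simp add: continuous_within)
  qed
qed

lemma continuous_on_x_ln_x: "continuous_on {0..} (\<lambda>x::real. x * ln x)"
  unfolding continuous_on_eq_continuous_within
proof
  fix x :: real assume "x \<in> {0..}"
  show "continuous (at x within {0..}) (\<lambda>x. x * ln x)"
  proof (cases "x = 0")
    case True
    have "((\<lambda>x::real. x * ln x) \<longlongrightarrow> 0) (at_right 0)" by real_asymp
    moreover have "at (0::real) within {0..} = at_right 0"
      by (rule at_within_nhd[of _ UNIV]) auto
    ultimately show ?thesis using True by (simp add: continuous_within)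
  next
    case False
    then have "isCont (\<lambda>x. x * ln x) x"
      using \<open>x \<in> {0..}\<close> by (auto intro!: continuous_intros)
    then show ?thesis by (rule continuous_at_imp_continuous_at_within)
  qed
qed

definition flat_weight :: "real \<Rightarrow> nat \<Rightarrow> real \<Rightarrow> real" where
  "flat_weight c n x = (if x < 1 then exp (- c / (1 - x)) / (1 - x) ^ n else 0)"

lemma flat_weight_has_real_derivative:
  assumes "x < 1"
  shows "(flat_weight c n has_real_derivative
    real n * flat_weight c (Suc n) x - c * flat_weight c (Suc (Suc n)) x) (at x)"
proof -
  have u: "1 - x \<noteq> 0" using assms by simp
  have e: "((\<lambda>y. exp (- c / (1 - y))) has_real_derivative exp (- c / (1 - x)) * (- c / (1 - x)\<^sup>2)) (at x)"
    using u by (auto intro!: derivative_eq_intros simp: field_simps power2_eq_square)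
  have p: "((\<lambda>y. (1 - y) ^ n) has_real_derivative - (real n * (1 - x) ^ (n - 1))) (at x)"
    by (auto intro!: derivative_eq_intros)
  have "(E * (- c / u\<^sup>2) * u ^ n - E * - (real n * u ^ (n - 1))) / (u ^ n * u ^ n)
      = real n * (E / u ^ Suc n) - c * (E / u ^ Suc (Suc n))" if "u \<noteq> 0" for u E :: real
    using that by (cases n) (simp_all add: field_simps power2_eq_square)
  then have "((\<lambda>y. exp (- c / (1 - y)) / (1 - y) ^ n) has_real_derivative
      real n * flat_weight c (Suc n) x - c * flat_weight c (Suc (Suc n)) x) (at x)"
    using DERIV_divide[OF e p] u assms by (simp add: flat_weight_def)
  then show ?thesis
    by (rule has_field_derivative_transform_within_open[of _ _ _ "{..<1}"])
      (use assms in \<open>auto simp: flat_weight_def\<close>)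
qed

lemma C2_on_flat_weight: "S \<subseteq> {..<1} \<Longrightarrow> \<exists>f' f''. C2_on S (flat_weight c n) f' f''"
proof (intro exI C2_on_at)
  assume S: "S \<subseteq> {..<1}"
  fix x assume "x \<in> S"
  then have x: "x < 1" using S by blast
  show "(flat_weight c n has_real_derivative
    real n * flat_weight c (Suc n) x - c * flat_weight c (Suc (Suc n)) x) (at x)"
    using flat_weight_has_real_derivative[OF x] .
  show "((\<lambda>x. real n * flat_weight c (Suc n) x - c * flat_weight c (Suc (Suc n)) x)
    has_real_derivative
      real n * (real (Suc n) * flat_weight c (Suc (Suc n)) x - c * flat_weight c (Suc (Suc (Suc n))) x)
      - c * (real (Suc (Suc n)) * flat_weight c (Suc (Suc (Suc n))) x
        - c * flat_weight c (Suc (Suc (Suc (Suc n)))) x)) (at x)"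
    using flat_weight_has_real_derivative[OF x] by (intro DERIV_diff DERIV_cmult)
next
  assume S: "S \<subseteq> {..<1}"
  have "isCont (flat_weight c k) x" if "x \<in> S" for x k
    using that S by (blast intro: DERIV_isCont flat_weight_has_real_derivative)
  then show "continuous_on S (\<lambda>x.
      real n * (real (Suc n) * flat_weight c (Suc (Suc n)) x - c * flat_weight c (Suc (Suc (Suc n))) x)
      - c * (real (Suc (Suc n)) * flat_weight c (Suc (Suc (Suc n))) x
        - c * flat_weight c (Suc (Suc (Suc (Suc n)))) x))"
    by (intro continuous_intros continuous_at_imp_continuous_on) auto
qed

lemma continuous_on_flat_weight:
  assumes "c > 0" "S \<subseteq> {..1}"
  shows "continuous_on S (flat_weight c n)"
proof (rule continuous_on_subset[OF _ assms(2)])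
  show "continuous_on {..1} (flat_weight c n)"
    unfolding continuous_on_eq_continuous_within
  proof
    fix x :: real assume "x \<in> {..1}"
    show "continuous (at x within {..1}) (flat_weight c n)"
    proof (cases "x < 1")
      case True
      then show ?thesis
        by (blast intro: continuous_at_imp_continuous_at_within DERIV_isCont
            flat_weight_has_real_derivative)
    next
      case False
      then have "x = 1" using \<open>x \<in> {..1}\<close> by simp
      have "eventually (\<lambda>x. x < 1) (at_left (1::real))"
        by (simp add: eventually_at_filter)
      then have "eventually (\<lambda>x. exp (- c / (1 - x)) / (1 - x) ^ n = flat_weight c n x) (at_left 1)"
        by eventually_elim (simp add: flat_weight_def)
      moreover have "((\<lambda>x. exp (- c / (1 - x)) / (1 - x) ^ n) \<longlongrightarrow> 0) (at_left 1)"
        using \<open>c > 0\<close> by real_asymp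
      ultimately have "(flat_weight c n \<longlongrightarrow> 0) (at_left 1)"
        by (blast intro: Lim_transform_eventually)
      moreover have "at (1::real) within {..1} = at_left 1"
        by (rule at_within_nhd[of _ UNIV]) auto
      ultimately show ?thesis
        using \<open>x = 1\<close> by (simp add: continuous_within flat_weight_def)
    qed
  qed
qed

lemma flat_weight_integral:
  assumes "c > 0"
  shows "(flat_weight c 2 has_integral exp (- c) / c) {0..1}"
proof -
  have "((\<lambda>x. - flat_weight c 0 x / c) has_real_derivative flat_weight c 2 x) (at x)" if "x < 1" for x
    using flat_weight_has_real_derivative[OF that, of c 0] assms
    by (auto intro!: derivative_eq_intros simp: numeral_2_eq_2)
  then have "(flat_weight c 2 has_integral (- flat_weight c 0 1 / c) - (- flat_weight c 0 0 / c)) {0..1}"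
    using assms
    by (intro fundamental_theorem_of_calculus_interior)
      (auto intro!: continuous_intros continuous_on_flat_weight
        simp: has_real_derivative_iff_has_vector_derivative[symmetric])
  then show ?thesis by (simp add: flat_weight_def)
qed

locale Gfun_setting =
  fixes lam :: real and h h' h'' :: "real \<Rightarrow> real"
  assumes lam_pos: "lam > 0" and C2_h: "C2_on {0..1} h h' h''"
begin

abbreviation integrand :: "real \<Rightarrow> real" where
  "integrand \<equiv> \<lambda>x. htilde lam h x / (1 - x)^2 * exp (- lam / (1 - x))"

lemma integrand_eq: "x \<le> 1 \<Longrightarrow> integrand x = htilde lam h x * flat_weight lam 2 x"
  by (cases "x < 1") (auto simp: flat_weight_def)

lemma rho_eq:
  assumes "x \<le> 1"
  shows "rho lam x = lam * exp lam * flat_weight lam 2 x"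
proof (cases "x < 1")
  case True
  then have "exp (- (lam * x / (1 - x))) = exp lam * exp (- lam / (1 - x))"
    by (simp add: exp_add[symmetric] field_simps)
  then show ?thesis using True by (simp add: rho_def flat_weight_def)
qed (use assms in \<open>auto simp: rho_def flat_weight_def\<close>)

lemma C2_on_htilde: "C2_on {0..1} (htilde lam h) h' h''"
proof -
  have "C2_on {0..1} (\<lambda>x. h x + - integral {0..1} (\<lambda>x. rho lam x * h x)) (\<lambda>x. h' x + 0) (\<lambda>x. h'' x + 0)"
    by (rule C2_on_add[OF C2_h C2_on_const])
  then show ?thesis by (simp add: htilde_def[abs_def])
qed

lemma continuous_on_integrand: "continuous_on {0..1} integrand"
proof -
  have "continuous_on {0..1} (\<lambda>x. htilde lam h x * flat_weight lam 2 x)"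
    using C2_onD(5)[OF C2_on_htilde] lam_pos
    by (auto intro!: continuous_intros continuous_on_flat_weight)
  then show ?thesis by (rule continuous_on_eq) (metis atLeastAtMost_iff integrand_eq)
qed

lemma rho_has_integral_1: "(rho lam has_integral 1) {0..1}"
proof -
  have "((\<lambda>x. lam * exp lam * flat_weight lam 2 x) has_integral lam * exp lam * (exp (- lam) / lam)) {0..1}"
    by (intro has_integral_mult_right flat_weight_integral lam_pos)
  moreover have "lam * exp lam * (exp (- lam) / lam) = 1"
    using lam_pos by (simp add: exp_minus)
  ultimately show ?thesis
    by (metis (no_types, lifting) atLeastAtMost_iff has_integral_eq rho_eq)
qed

lemma integrand_has_integral_0: "(integrand has_integral 0) {0..1}"
proof -
  define c where "c = integral {0..1} (\<lambda>x. rho lam x * h x)"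
  have "continuous_on {0..1} (\<lambda>x. lam * exp lam * flat_weight lam 2 x * h x)"
    using C2_onD(5)[OF C2_h] lam_pos by (intro continuous_intros continuous_on_flat_weight) auto
  then have "continuous_on {0..1} (\<lambda>x. rho lam x * h x)"
    by (rule continuous_on_eq) (simp add: rho_eq)
  then have "((\<lambda>x. rho lam x * h x) has_integral c) {0..1}"
    unfolding c_def by (intro integrable_integral integrable_continuous_interval)
  from has_integral_diff[OF this has_integral_mult_left[OF rho_has_integral_1, of c]]
  have "((\<lambda>x. rho lam x * htilde lam h x) has_integral 0) {0..1}"
    by (simp add: htilde_def c_def algebra_simps)
  from has_integral_mult_right[OF this, of "exp (- lam) / lam"]
  have "((\<lambda>x. exp (- lam) / lam * (rho lam x * htilde lam h x)) has_integral 0) {0..1}"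
    by simp
  moreover have "exp (- lam) / lam * (rho lam x * htilde lam h x) = integrand x" if "x \<in> {0..1}" for x
    using that lam_pos by (subst integrand_eq) (auto simp: rho_eq exp_minus)
  ultimately show ?thesis
    by (rule has_integral_eq[rotated])
qed

definition average_integrand :: "real \<Rightarrow> real" where
  "average_integrand s = integral {0..1} (\<lambda>r. integrand (r * s))"

lemma Gfun_eq_near_0:
  assumes "0 < s" "s < 1"
  shows "Gfun lam h s = exp (lam / (1 - s)) * average_integrand s"
proof -
  have "((\<lambda>r. s *\<^sub>R integrand (r * s)) has_integral integral {0 * s..1 * s} integrand) {0..1}"
  proof (rule has_integral_substitution[where c=0 and d=1])
    show "(\<lambda>r. r * s) ` {0..1} \<subseteq> {0..1}"
      using assms by (auto simp: image_subset_iff intro!: mult_le_one)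
    show "((\<lambda>r. r * s) has_real_derivative s) (at r within {0..1})" for r
      by (auto intro!: derivative_eq_intros)
  qed (use assms continuous_on_integrand in auto)
  then have "integral {0..1} (\<lambda>r. s *\<^sub>R integrand (r * s)) = integral {0..s} integrand"
    by (simp only: integral_unique mult_zero_left mult_1_left)
  then have "integral {0..s} integrand = s * average_integrand s"
    unfolding average_integrand_def integral_cmul by simp
  then show ?thesis
    using assms unfolding Gfun_def by simp
qed

lemma C2_on_near_0:
  assumes "b < 1"
  shows "\<exists>A' A''. C2_on {0..b} (\<lambda>s. exp (lam / (1 - s)) * average_integrand s) A' A''"
proof -
  have below_1: "{0..b} \<subseteq> {..<1}" using assms by auto
  then obtain w' w'' where "C2_on {0..b} (flat_weight lam 2) w' w''"
    using C2_on_flat_weight by blast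
  moreover have "C2_on {0..b} (htilde lam h) h' h''"
    by (rule C2_on_subset[OF C2_on_htilde]) (use assms in auto)
  ultimately obtain m' m'' where "C2_on {0..b} (\<lambda>x. htilde lam h x * flat_weight lam 2 x) m' m''"
    using C2_on_mult by blast
  then have "C2_on {0..b} integrand m' m''"
    by (rule C2_on_cong, subst integrand_eq) (use assms in auto)
  from C2_on_integral_rescaled[OF this]
  obtain q' q'' where q: "C2_on {0..b} average_integrand q' q''"
    unfolding average_integrand_def[abs_def] by blast
  obtain e' e'' where "C2_on {0..b} (flat_weight (- lam) 0) e' e''"
    using C2_on_flat_weight below_1 by blast
  then have "C2_on {0..b} (\<lambda>s. exp (lam / (1 - s))) e' e''"
    by (rule C2_on_cong) (use assms in \<open>simp add: flat_weight_def\<close>)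
  from C2_on_mult[OF this q] show ?thesis by blast
qed

definition W :: "real \<Rightarrow> real \<Rightarrow> real" where
  "W s x = exp (lam / (2 * (1 - s))) * flat_weight (lam / 2) 0 x"

lemma W_eq: "x < 1 \<Longrightarrow> W s x = exp (lam / (2 * (1 - s)) - lam / (2 * (1 - x)))"
  unfolding W_def flat_weight_def by (simp add: mult_exp_exp)

lemma W_self: "s < 1 \<Longrightarrow> W s s = 1"
  by (simp add: W_eq)

lemma W_1: "W s 1 = 0"
  by (simp add: W_def flat_weight_def)

lemma W_mem:
  assumes "s < 1" "x \<in> {s..1}"
  shows "W s x \<in> {0..1}"
proof (cases "x < 1")
  case True
  have "lam / (2 * (1 - s)) \<le> lam / (2 * (1 - x))"
    using assms True lam_pos by (intro divide_left_mono) auto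
  then show ?thesis using True by (simp add: W_eq)
qed (use assms W_1 in auto)

lemma W_has_real_derivative:
  assumes "x < 1"
  shows "(W s has_real_derivative - (lam / 2) * exp (lam / (2 * (1 - s))) * flat_weight (lam / 2) 2 x) (at x)"
  using DERIV_cmult[OF flat_weight_has_real_derivative[OF assms, of "lam / 2" 0], of "exp (lam / (2 * (1 - s)))"]
  unfolding W_def[abs_def] by (simp add: numeral_2_eq_2 mult_ac)

definition X :: "real \<Rightarrow> real \<Rightarrow> real" where
  "X s w = 1 - lam * (1 - s) / (lam - 2 * (1 - s) * ln w)"

definition X_s :: "real \<Rightarrow> real \<Rightarrow> real" where
  "X_s s w = lam^2 / (lam - 2 * (1 - s) * ln w)^2"

definition X_ss :: "real \<Rightarrow> real \<Rightarrow> real" where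
  "X_ss s w = - (4 * lam^2 * ln w / (lam - 2 * (1 - s) * ln w)^3)"

definition F :: "real \<Rightarrow> real \<Rightarrow> real" where
  "F s w = w * htilde lam h (X s w)"

definition F_s :: "real \<Rightarrow> real \<Rightarrow> real" where
  "F_s s w = w * (h' (X s w) * X_s s w)"

definition F_ss :: "real \<Rightarrow> real \<Rightarrow> real" where
  "F_ss s w = w * (h'' (X s w) * (X_s s w)^2 + h' (X s w) * X_ss s w)"

definition integral_F :: "real \<Rightarrow> real" where
  "integral_F s = integral {0..1} (F s)"

lemma lam_le_denominator:
  assumes "s \<le> 1" "0 < w" "w \<le> 1"
  shows "lam \<le> lam - 2 * (1 - s) * ln w"
  using assms mult_nonneg_nonpos[of "2 * (1 - s)" "ln w"] by simp

lemma denominator_pos: "s \<le> 1 \<Longrightarrow> 0 < w \<Longrightarrow> w \<le> 1 \<Longrightarrow> lam - 2 * (1 - s) * ln w > 0"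
  using lam_le_denominator lam_pos by fastforce

lemma X_mem:
  assumes "0 \<le> s" "s \<le> 1" "0 < w" "w \<le> 1"
  shows "X s w \<in> {0..1}"
proof -
  let ?D = "lam - 2 * (1 - s) * ln w"
  have D: "lam \<le> ?D" "0 < ?D" using lam_le_denominator denominator_pos assms by auto
  have "lam * (1 - s) \<le> (1 - s) * ?D"
    using D assms mult_right_mono[of lam ?D "1 - s"] by (simp add: mult.commute)
  then have "lam * (1 - s) / ?D \<le> 1 - s" using D by (simp add: pos_divide_le_eq)
  moreover have "0 \<le> lam * (1 - s) / ?D" using assms lam_pos D by simp
  ultimately show ?thesis using assms unfolding X_def by auto
qed

lemma X_has_real_derivative:
  assumes "s \<le> 1" "0 < w" "w \<le> 1"
  shows "((\<lambda>s. X s w) has_real_derivative X_s s w) (at s)"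
proof -
  define D where "D = lam - 2 * (1 - s) * ln w"
  have "D > 0" using denominator_pos[OF assms] by (simp add: D_def)
  then have "((\<lambda>s. 1 - lam * (1 - s) / (lam - 2 * (1 - s) * ln w)) has_real_derivative
      - ((- lam * D - lam * (1 - s) * (2 * ln w)) / (D * D))) (at s)"
    by (auto intro!: derivative_eq_intros simp: D_def)
  moreover have "- (- lam * D - lam * (1 - s) * (2 * ln w)) = lam^2"
    unfolding D_def by (simp add: algebra_simps power2_eq_square)
  ultimately show ?thesis
    unfolding X_def X_s_def D_def[symmetric] by (simp add: power2_eq_square minus_divide_left)
qed

lemma X_s_has_real_derivative:
  assumes "s \<le> 1" "0 < w" "w \<le> 1"
  shows "((\<lambda>s. X_s s w) has_real_derivative X_ss s w) (at s)"
proof -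
  define D where "D = lam - 2 * (1 - s) * ln w"
  have D: "D \<noteq> 0" using denominator_pos[OF assms] by (simp add: D_def)
  have "((\<lambda>d. lam^2 / d^2) has_real_derivative - (2 * lam^2 / D^3)) (at D)"
    using D by (auto intro!: derivative_eq_intros simp: field_simps power2_eq_square power3_eq_cube)
  moreover have "((\<lambda>s. lam - 2 * (1 - s) * ln w) has_real_derivative 2 * ln w) (at s)"
    by (auto intro!: derivative_eq_intros)
  ultimately have "((\<lambda>s. lam^2 / (lam - 2 * (1 - s) * ln w)^2) has_real_derivative
      - (2 * lam^2 / D^3) * (2 * ln w)) (at s)"
    unfolding D_def by (rule DERIV_chain2)
  then show ?thesis
    unfolding X_s_def X_ss_def D_def[symmetric] by (simp add: mult.assoc)
qed

lemma X_s_bounds: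
  assumes "s \<le> 1" "0 < w" "w \<le> 1"
  shows "0 \<le> X_s s w" "X_s s w \<le> 1"
proof -
  let ?D = "lam - 2 * (1 - s) * ln w"
  have D: "lam \<le> ?D" "0 < ?D" using lam_le_denominator denominator_pos assms by auto
  show "0 \<le> X_s s w" unfolding X_s_def by simp
  have "lam^2 \<le> ?D^2" using D lam_pos by (intro power_mono) auto
  then show "X_s s w \<le> 1" unfolding X_s_def using D by simp
qed

lemma abs_X_ss_le:
  assumes "s \<le> 1" "0 < w" "w \<le> 1"
  shows "\<bar>X_ss s w\<bar> \<le> 4 / lam * \<bar>ln w\<bar>"
proof -
  let ?D = "lam - 2 * (1 - s) * ln w"
  have D: "lam \<le> ?D" "0 < ?D" using lam_le_denominator denominator_pos assms by auto
  have "\<bar>X_ss s w\<bar> = 4 * lam^2 * \<bar>ln w\<bar> / ?D^3"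
    unfolding X_ss_def using D by (simp add: abs_mult)
  also have "\<dots> \<le> 4 * lam^2 * \<bar>ln w\<bar> / lam^3"
    by (rule frac_le) (use D lam_pos in \<open>auto intro!: power_mono\<close>)
  also have "\<dots> = 4 / lam * \<bar>ln w\<bar>"
    using lam_pos by (simp add: field_simps power2_eq_square power3_eq_cube)
  finally show ?thesis .
qed

lemma F_has_real_derivative:
  assumes "s \<in> {0..1}" "w \<in> {0..1}"
  shows "((\<lambda>s. F s w) has_real_derivative F_s s w) (at s within {0..1})"
proof (cases "w = 0")
  case False
  then have w: "0 < w" "w \<le> 1" using assms by auto
  have "(htilde lam h has_real_derivative h' (X s w)) (at (X s w) within (\<lambda>s. X s w) ` {0..1})"
    by (rule DERIV_subset[OF C2_onD(1)[OF C2_on_htilde]]) (use X_mem assms w in auto)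
  moreover have "((\<lambda>s. X s w) has_real_derivative X_s s w) (at s within {0..1})"
    using X_has_real_derivative assms w by (auto intro: has_field_derivative_at_within)
  ultimately have "((\<lambda>s. htilde lam h (X s w)) has_real_derivative h' (X s w) * X_s s w) (at s within {0..1})"
    using DERIV_image_chain by (fastforce simp: o_def)
  then show ?thesis unfolding F_def F_s_def by (rule DERIV_cmult)
qed (simp add: F_def F_s_def)

lemma F_s_has_real_derivative:
  assumes "s \<in> {0..1}" "w \<in> {0..1}"
  shows "((\<lambda>s. F_s s w) has_real_derivative F_ss s w) (at s within {0..1})"
proof (cases "w = 0")
  case False
  then have w: "0 < w" "w \<le> 1" using assms by auto
  have "(h' has_real_derivative h'' (X s w)) (at (X s w) within (\<lambda>s. X s w) ` {0..1})"
    by (rule DERIV_subset[OF C2_onD(2)[OF C2_h]]) (use X_mem assms w in auto)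
  moreover have "((\<lambda>s. X s w) has_real_derivative X_s s w) (at s within {0..1})"
    using X_has_real_derivative assms w by (auto intro: has_field_derivative_at_within)
  ultimately have "((\<lambda>s. h' (X s w)) has_real_derivative h'' (X s w) * X_s s w) (at s within {0..1})"
    using DERIV_image_chain by (fastforce simp: o_def)
  moreover have "((\<lambda>s. X_s s w) has_real_derivative X_ss s w) (at s within {0..1})"
    using X_s_has_real_derivative assms w by (auto intro: has_field_derivative_at_within)
  ultimately show ?thesis
    unfolding F_s_def F_ss_def
    by (auto intro!: derivative_eq_intros simp: power2_eq_square algebra_simps)
qed (simp add: F_s_def F_ss_def)

lemma continuous_on_X:
  shows "continuous_on ({0..1} \<times> {0<..1}) (\<lambda>p. X (fst p) (snd p))"
    and "continuous_on ({0..1} \<times> {0<..1}) (\<lambda>p. X_s (fst p) (snd p))"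
    and "continuous_on ({0..1} \<times> {0<..1}) (\<lambda>p. X_ss (fst p) (snd p))"
proof -
  have "\<forall>p\<in>{0..1} \<times> {0<..1}. lam - 2 * (1 - fst p) * ln (snd p) \<noteq> 0"
    using denominator_pos by force
  then show "continuous_on ({0..1} \<times> {0<..1}) (\<lambda>p. X (fst p) (snd p))"
    "continuous_on ({0..1} \<times> {0<..1}) (\<lambda>p. X_s (fst p) (snd p))"
    "continuous_on ({0..1} \<times> {0<..1}) (\<lambda>p. X_ss (fst p) (snd p))"
    unfolding X_def X_s_def X_ss_def by (auto intro!: continuous_intros)
qed

lemma continuous_on_comp_X:
  "continuous_on {0..1} g \<Longrightarrow> continuous_on ({0..1} \<times> {0<..1}) (\<lambda>p. g (X (fst p) (snd p)))"
  by (rule continuous_on_compose2[OF _ continuous_on_X(1)]) (auto intro: X_mem)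

lemma abs_F_le:
  assumes "\<And>y. y \<in> {0..1} \<Longrightarrow> \<bar>htilde lam h y\<bar> \<le> M" "s \<in> {0..1}" "w \<in> {0..1}"
  shows "\<bar>F s w\<bar> \<le> M * w"
proof (cases "w = 0")
  case False
  then have "\<bar>htilde lam h (X s w)\<bar> \<le> M" using assms X_mem by simp
  from mult_left_mono[OF this, of w] show ?thesis
    unfolding F_def abs_mult using assms(3) by (simp add: mult.commute)
qed (simp add: F_def)

lemma abs_F_s_le:
  assumes "\<And>y. y \<in> {0..1} \<Longrightarrow> \<bar>h' y\<bar> \<le> M1" "s \<in> {0..1}" "w \<in> {0..1}"
  shows "\<bar>F_s s w\<bar> \<le> M1 * w"
proof (cases "w = 0")
  case False
  then have "\<bar>h' (X s w)\<bar> \<le> M1" "0 \<le> X_s s w" "X_s s w \<le> 1"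
    using assms X_mem X_s_bounds by auto
  then have "\<bar>h' (X s w)\<bar> * X_s s w \<le> M1"
    using mult_right_le_one_le[of "\<bar>h' (X s w)\<bar>" "X_s s w"] by linarith
  from mult_left_mono[OF this, of w] show ?thesis
    unfolding F_s_def abs_mult using assms(3) \<open>0 \<le> X_s s w\<close> by (simp add: mult.commute)
qed (simp add: F_s_def)

lemma abs_F_ss_le:
  assumes "\<And>y. y \<in> {0..1} \<Longrightarrow> \<bar>h' y\<bar> \<le> M1" "\<And>y. y \<in> {0..1} \<Longrightarrow> \<bar>h'' y\<bar> \<le> M2"
    and "s \<in> {0..1}" "w \<in> {0..1}"
  shows "\<bar>F_ss s w\<bar> \<le> M2 * w + 4 * M1 / lam * \<bar>w * ln w\<bar>"
proof (cases "w = 0")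
  case False
  then have w: "0 < w" "w \<le> 1" using assms by auto
  have bounds: "\<bar>h'' (X s w)\<bar> \<le> M2" "\<bar>h' (X s w)\<bar> \<le> M1" "0 \<le> X_s s w" "X_s s w \<le> 1"
    "\<bar>X_ss s w\<bar> \<le> 4 / lam * \<bar>ln w\<bar>"
    using assms w X_mem X_s_bounds abs_X_ss_le by auto
  have "\<bar>h'' (X s w)\<bar> * (X_s s w)^2 \<le> \<bar>h'' (X s w)\<bar>"
    by (rule mult_right_le_one_le) (use bounds in \<open>auto simp: power_le_one\<close>)
  with bounds have "\<bar>h'' (X s w)\<bar> * (X_s s w)^2 \<le> M2" by linarith
  moreover have "\<bar>h' (X s w)\<bar> * \<bar>X_ss s w\<bar> \<le> M1 * (4 / lam * \<bar>ln w\<bar>)"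
    by (rule mult_mono) (use bounds in auto)
  ultimately have "\<bar>h'' (X s w) * (X_s s w)^2 + h' (X s w) * X_ss s w\<bar> \<le> M2 + M1 * (4 / lam * \<bar>ln w\<bar>)"
    using abs_triangle_ineq[of "h'' (X s w) * (X_s s w)^2" "h' (X s w) * X_ss s w"]
    by (simp add: abs_mult)
  from mult_left_mono[OF this, of w] w show ?thesis
    unfolding F_ss_def abs_mult[of w] by (simp add: abs_mult algebra_simps)
qed (simp add: F_ss_def)

lemma continuous_on_F: "continuous_on ({0..1} \<times> {0..1}) (\<lambda>(s, w). F s w)"
proof -
  obtain M where M: "\<And>y. y \<in> {0..1} \<Longrightarrow> \<bar>htilde lam h y\<bar> \<le> M"
    using continuous_on_compact_bound[OF compact_Icc C2_onD(5)[OF C2_on_htilde]] by auto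
  show ?thesis
  proof (rule continuous_on_Times_if_dominated[where B="\<lambda>w. M * w"])
    show "continuous_on ({0..1} \<times> {0<..1}) (\<lambda>(s, w). F s w)"
      unfolding F_def[abs_def] case_prod_beta'
      by (intro continuous_intros continuous_on_comp_X C2_onD(5)[OF C2_on_htilde])
  qed (use abs_F_le[OF M] in \<open>auto intro!: continuous_intros\<close>)
qed

lemma continuous_on_F_s: "continuous_on ({0..1} \<times> {0..1}) (\<lambda>(s, w). F_s s w)"
proof -
  obtain M1 where M1: "\<And>y. y \<in> {0..1} \<Longrightarrow> \<bar>h' y\<bar> \<le> M1"
    using continuous_on_compact_bound[OF compact_Icc C2_onD(4)[OF C2_h]] by auto
  show ?thesis
  proof (rule continuous_on_Times_if_dominated[where B="\<lambda>w. M1 * w"])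
    show "continuous_on ({0..1} \<times> {0<..1}) (\<lambda>(s, w). F_s s w)"
      unfolding F_s_def[abs_def] case_prod_beta'
      by (intro continuous_intros continuous_on_comp_X continuous_on_X C2_onD(4)[OF C2_h])
  qed (use abs_F_s_le[OF M1] in \<open>auto intro!: continuous_intros\<close>)
qed

lemma continuous_on_F_ss: "continuous_on ({0..1} \<times> {0..1}) (\<lambda>(s, w). F_ss s w)"
proof -
  obtain M1 where M1: "\<And>y. y \<in> {0..1} \<Longrightarrow> \<bar>h' y\<bar> \<le> M1"
    using continuous_on_compact_bound[OF compact_Icc C2_onD(4)[OF C2_h]] by auto
  obtain M2 where M2: "\<And>y. y \<in> {0..1} \<Longrightarrow> \<bar>h'' y\<bar> \<le> M2"
    using continuous_on_compact_bound[OF compact_Icc C2_onD(3)[OF C2_h]] by auto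
  show ?thesis
  proof (rule continuous_on_Times_if_dominated[where B="\<lambda>w. M2 * w + 4 * M1 / lam * \<bar>w * ln w\<bar>"])
    show "continuous_on ({0..1} \<times> {0<..1}) (\<lambda>(s, w). F_ss s w)"
      unfolding F_ss_def[abs_def] case_prod_beta'
      by (intro continuous_intros continuous_on_comp_X continuous_on_X C2_onD(3,4)[OF C2_h])
    show "continuous_on {0..1} (\<lambda>w. M2 * w + 4 * M1 / lam * \<bar>w * ln w\<bar>)"
      by (intro continuous_intros continuous_on_subset[OF continuous_on_x_ln_x]) auto
  qed (use abs_F_ss_le[OF M1 M2] in auto)
qed

lemma C2_on_integral_F:
  "C2_on {0..1} integral_F (\<lambda>s. integral {0..1} (F_s s)) (\<lambda>s. integral {0..1} (F_ss s))"
  unfolding integral_F_def[abs_def]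
  by (intro C2_on_parametric_integral F_has_real_derivative F_s_has_real_derivative
      continuous_on_F continuous_on_F_s continuous_on_F_ss) auto

lemma X_W:
  assumes "s \<le> x" "x < 1"
  shows "X s (W s x) = x"
proof -
  have denominator: "lam - 2 * p * (lam / (2 * p) - lam / (2 * q)) = lam * p / q"
    if "p > 0" "q > 0" for p q
    using that by (simp add: field_simps)
  have ln_W: "ln (W s x) = lam / (2 * (1 - s)) - lam / (2 * (1 - x))"
    using assms by (simp add: W_eq)
  have "lam - 2 * (1 - s) * ln (W s x) = lam * (1 - s) / (1 - x)"
    unfolding ln_W by (rule denominator) (use assms in auto)
  then have "X s (W s x) = 1 - lam * (1 - s) / (lam * (1 - s) / (1 - x))"
    by (simp add: X_def)
  also have "\<dots> = x"
    using assms lam_pos by simp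
  finally show ?thesis .
qed

lemma W_derivative_times_F:
  assumes "s \<le> x" "x < 1"
  shows "- (lam / 2) * exp (lam / (2 * (1 - s))) * flat_weight (lam / 2) 2 x * F s (W s x)
    = - (lam / 2) * exp (lam / (1 - s)) * integrand x"
proof -
  define K where "K = exp (lam / (2 * (1 - s)))"
  define E where "E = exp (- (lam / 2) / (1 - x))"
  have halves: "lam / (2 * p) + lam / (2 * p) = lam / p" "- (lam / 2) / p + - (lam / 2) / p = - lam / p"
    for p :: real
    by (simp_all add: field_simps)
  have "K * K = exp (lam / (1 - s))" "E * E = exp (- lam / (1 - x))"
    unfolding K_def E_def mult_exp_exp halves by simp_all
  moreover have "W s x = K * E" "flat_weight (lam / 2) 2 x = E / (1 - x)^2"
    using assms by (simp_all add: W_def K_def E_def flat_weight_def)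
  ultimately show ?thesis
    using assms unfolding F_def X_W[OF assms] K_def[symmetric] by (simp add: algebra_simps)
qed

lemma integral_F_by_substitution:
  assumes "0 \<le> s" "s < 1"
  shows "((\<lambda>x. - (lam / 2) * exp (lam / (1 - s)) * integrand x) has_integral - integral_F s) {s..1}"
proof -
  have "continuous_on {0..1} (F s)"
    by (rule continuous_on_compose2[OF continuous_on_F, of _ "\<lambda>w. (s, w)", simplified])
      (use assms in \<open>auto intro!: continuous_intros\<close>)
  moreover have "continuous_on {s..1} (W s)"
    unfolding W_def using lam_pos by (intro continuous_intros continuous_on_flat_weight) auto
  ultimately have "((\<lambda>x. (- (lam / 2) * exp (lam / (2 * (1 - s))) * flat_weight (lam / 2) 2 x) *\<^sub>R F s (W s x))
      has_integral integral {W s s..W s 1} (F s) - integral {W s 1..W s s} (F s)) {s..1}"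
    using assms W_mem W_has_real_derivative
    by (intro has_integral_substitution_general[where s="{1}" and c=0 and d=1])
      (auto intro: has_field_derivative_at_within)
  moreover have "(- (lam / 2) * exp (lam / (2 * (1 - s))) * flat_weight (lam / 2) 2 x) *\<^sub>R F s (W s x)
      = - (lam / 2) * exp (lam / (1 - s)) * integrand x" if "x \<in> {s..1}" for x
  proof (cases "x < 1")
    case False
    \<comment> \<open>at \<open>x = 1\<close> both sides vanish, the right one because \<open>integrand 1\<close> divides by zero\<close>
    then show ?thesis using that by (simp add: flat_weight_def)
  qed (use W_derivative_times_F that in simp)
  moreover have "integral {W s s..W s 1} (F s) - integral {W s 1..W s s} (F s) = - integral_F s"
    using assms by (simp add: W_self W_1 integral_F_def)
  ultimately show ?thesis
    by (metis (no_types, lifting) has_integral_eq)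
qed

lemma Gfun_eq_near_1:
  assumes "0 < s" "s < 1"
  shows "Gfun lam h s = - (2 / lam) / s * integral_F s"
proof -
  have "(integrand has_integral integral {s..1} integrand) {s..1}"
    using assms
    by (intro integrable_integral integrable_continuous_interval continuous_on_subset[OF continuous_on_integrand]) auto
  from has_integral_unique[OF has_integral_mult_right[OF this] integral_F_by_substitution]
  have "- (lam / 2) * exp (lam / (1 - s)) * integral {s..1} integrand = - integral_F s"
    using assms by simp
  moreover have "integral {0..s} integrand + integral {s..1} integrand = 0"
    using Henstock_Kurzweil_Integration.integral_combine[of 0 s 1 integrand] assms
      integrable_continuous_interval[OF continuous_on_integrand] integral_unique[OF integrand_has_integral_0]
    by simp
  then have "integral {0..s} integrand = - integral {s..1} integrand"
    by linarith
  ultimately show ?thesis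
    using assms lam_pos unfolding Gfun_def by (simp add: field_simps)
qed

lemma C2_on_near_1:
  assumes "0 < a"
  shows "\<exists>B' B''. C2_on {a..1} (\<lambda>s. - (2 / lam) / s * integral_F s) B' B''"
proof -
  define c where "c = - (2 / lam)"
  have "C2_on {a..1} (\<lambda>s. c / s) (\<lambda>s. - (c / s^2)) (\<lambda>s. 2 * c / s^3)"
  proof (rule C2_on_at)
    fix s assume "s \<in> {a..1}"
    then have "s \<noteq> 0" using assms by auto
    then show "((\<lambda>s. c / s) has_real_derivative - (c / s^2)) (at s)"
      "((\<lambda>s. - (c / s^2)) has_real_derivative 2 * c / s^3) (at s)"
      by (auto intro!: derivative_eq_intros simp: field_simps power2_eq_square power3_eq_cube)
  qed (use assms in \<open>auto intro!: continuous_intros\<close>)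
  from C2_on_mult[OF this C2_on_subset[OF C2_on_integral_F]] show ?thesis
    unfolding c_def using assms by auto
qed

end

theorem lemma5:
  fixes lam :: real and h :: "real \<Rightarrow> real"
  assumes "lam > 0" and "C2_on_01 h"
  shows "\<exists>g. continuous_on {0..1} g \<and> (\<forall>s\<in>{0<..<1}. g s = Gfun lam h s) \<and> C2_on_01 g"
proof -
  obtain h' h'' where "C2_on {0..1} h h' h''"
    using assms(2) by (auto simp: C2_on_01_iff)
  then interpret Gfun_setting lam h h' h''
    using assms(1) by unfold_locales
  obtain A' A'' where A: "C2_on {0..3/4} (\<lambda>s. exp (lam / (1 - s)) * average_integrand s) A' A''"
    using C2_on_near_0[of "3/4"] by auto
  obtain B' B'' where B: "C2_on {1/4..1} (\<lambda>s. - (2 / lam) / s * integral_F s) B' B''"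
    using C2_on_near_1[of "1/4"] by auto
  define g where "g s = (if s \<le> 1/2 then exp (lam / (1 - s)) * average_integrand s
    else - (2 / lam) / s * integral_F s)" for s
  have "exp (lam / (1 - s)) * average_integrand s = - (2 / lam) / s * integral_F s" if "s \<in> {1/4..3/4}" for s
    using that Gfun_eq_near_0[of s] Gfun_eq_near_1[of s] by simp
  then have "C2_on {0..1} g (\<lambda>s. if s \<le> 1/2 then A' s else B' s) (\<lambda>s. if s \<le> 1/2 then A'' s else B'' s)"
    unfolding g_def by (intro C2_on_glue[OF A B]) auto
  moreover have "g s = Gfun lam h s" if "s \<in> {0<..<1}" for s
    using that Gfun_eq_near_0[of s] Gfun_eq_near_1[of s] by (simp add: g_def)
  ultimately show ?thesis
    by (metis C2_onD(5) C2_on_01_iff)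
qed

end
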